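(* Let $q>1$ be the smallest period of $H$. Then $c>2A$, and at least one gap $\gamma_m$ ($1\le m\le q-1$) of the spectrum of $H$ is open.
   Context: Let $q\ge 2$ be an integer and let $(a_n)_{n\in\mathbb Z}$, $(b_n)_{n\in\mathbb Z}$ be real sequences with $a_n>0$, $a_{n+q}=a_n$, $b_{n+q}=b_n$ for all $n$, where $q$ is the smallest common period (there is no $1\le p<q$ with $a_{n+p}=a_n$ and $b_{n+p}=b_n$ for all $n$). $H$ is the bounded self-adjoint operator on $\ell^2(\mathbb Z)$ given by $(H\psi)_n=a_{n-1}\psi_{n-1}+b_n\psi_n+a_n\psi_{n+1}$. Set $A=(a_1a_2\cdots a_q)^{1/q}$. For $\lambda\in\mathbb C$ let $\phi(\lambda),\theta(\lambda)$ be the solutions of $a_{n-1}\psi_{n-1}+b_n\psi_n+a_n\psi_{n+1}=\lambda\psi_n$ ($n\in\mathbb Z$) with $\phi_0=0,\phi_1=1$ and $\theta_0=1,\theta_1=0$; the discriminant is the degree-$q$ polynomial $D(\lambda)=\phi_{q+1}(\lambda)+\theta_q(\lambda)$. The spectrum of $H$ is $\{\lambda\in\mathbb R:|D(\lambda)|\le 2\}$, a union of the $q$ bands $[\lambda^+_{m-1},\lambda^-_m]$, $m=1,\dots,q$, with $\lambda^+_0<\lambda^-_1\le\lambda^+_1<\lambda^-_2\le\dots\le\lambda^+_{q-1}<\lambda^-_q$, separated by the gaps $\gamma_m=(\lambda^-_m,\lambda^+_m)$, $m=1,\dots,q-1$ (a gap is open if $\lambda^-_m<\lambda^+_m$). Let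 $c=(\lambda^-_q-\lambda^+_0)/2$ be half the width of the spectrum. *)

theory Defs
  imports "HOL-Computational_Algebra.Polynomial"
begin

text \<open>Solutions of the three-term recurrence
  a(n-1) psi(n-1) + b(n) psi(n) + a(n) psi(n+1) = lambda psi(n), as real polynomials
  in lambda, for n >= 0, with prescribed psi(0) = p0, psi(1) = p1.\<close>
fun jsol :: "(int \<Rightarrow> real) \<Rightarrow> (int \<Rightarrow> real) \<Rightarrow> real poly \<Rightarrow> real poly \<Rightarrow> nat \<Rightarrow> real poly" where
  "jsol a b p0 p1 0 = p0"
| "jsol a b p0 p1 (Suc 0) = p1"
| "jsol a b p0 p1 (Suc (Suc k)) =
     smult (1 / a (int k + 1))
       ([:- b (int k + 1), 1:] * jsol a b p0 p1 (Suc k) - smult (a (int k)) (jsol a b p0 p1 k))"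

definition jphi :: "(int \<Rightarrow> real) \<Rightarrow> (int \<Rightarrow> real) \<Rightarrow> nat \<Rightarrow> real poly" where
  "jphi a b = jsol a b 0 1"

definition jtheta :: "(int \<Rightarrow> real) \<Rightarrow> (int \<Rightarrow> real) \<Rightarrow> nat \<Rightarrow> real poly" where
  "jtheta a b = jsol a b 1 0"

definition discr :: "(int \<Rightarrow> real) \<Rightarrow> (int \<Rightarrow> real) \<Rightarrow> nat \<Rightarrow> real poly" where
  "discr a b q = jphi a b (q + 1) + jtheta a b q"

definition sorted_roots :: "real poly \<Rightarrow> real list" where
  "sorted_roots p = (THE xs. sorted xs \<and> p = smult (lead_coeff p) (\<Prod>x\<leftarrow>xs. [:- x, 1:]))"

text \<open>Band edges: the 2q roots of D^2 - 4 in increasing order are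
  lambda+_0 <= lambda-_1 <= lambda+_1 <= ... <= lambda-_q.\<close>
definition edge_plus :: "(int \<Rightarrow> real) \<Rightarrow> (int \<Rightarrow> real) \<Rightarrow> nat \<Rightarrow> nat \<Rightarrow> real" where
  "edge_plus a b q m = sorted_roots ((discr a b q)\<^sup>2 - 4) ! (2 * m)"

definition edge_minus :: "(int \<Rightarrow> real) \<Rightarrow> (int \<Rightarrow> real) \<Rightarrow> nat \<Rightarrow> nat \<Rightarrow> real" where
  "edge_minus a b q m = sorted_roots ((discr a b q)\<^sup>2 - 4) ! (2 * m - 1)"

definition half_width :: "(int \<Rightarrow> real) \<Rightarrow> (int \<Rightarrow> real) \<Rightarrow> nat \<Rightarrow> real" where
  "half_width a b q = (edge_minus a b q q - edge_plus a b q 0) / 2"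

definition geo_mean_a :: "(int \<Rightarrow> real) \<Rightarrow> nat \<Rightarrow> real" where
  "geo_mean_a a q = root q (\<Prod>i=1..int q. a i)"

end

theory Submission
  imports Defs "HOL-Analysis.Analysis" "HOL-Computational_Algebra.Fundamental_Theorem_Algebra"
begin

text \<open>The roots of \<open>D\<^sup>2 - 4\<close> are the eigenvalues of the Floquet problems
  \<open>\<psi>\<^sub>n\<^sub>+\<^sub>q = \<plusminus>\<psi>\<^sub>n\<close>. These problems are self-adjoint, so \<open>D\<^sup>2 - 4\<close> splits into \<open>2 q\<close> real
  linear factors, and the band edges are its sorted roots.

  The largest eigenvalue of \<open>H\<close> on \<open>q\<close>-periodic sequences, and minus the largest eigenvalue of the
  same matrix with \<open>b\<close> replaced by \<open>-b\<close>, are band edges. Testing both Rayleigh quotients with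
  \<open>t\<^sub>k = A\<^sup>k / (a\<^sub>0 \<cdots> a\<^sub>k\<^sub>-\<^sub>1)\<close> shows that these two edges are at least \<open>4 A\<close> apart; equality
  would make \<open>t\<close> a common eigenvector, which forces \<open>a \<equiv> A\<close> and \<open>b\<close> constant, i.e. period \<open>1\<close>.
  Hence \<open>c > 2 A\<close>.

  If all gaps were closed, \<open>|D| \<le> 2\<close> on the whole interval \<open>[\<lambda>\<^sup>+\<^sub>0, \<lambda>\<^sup>-\<^sub>q]\<close>. Chebyshev's
  extremal property, applied to \<open>D / 2\<close> rescaled from this interval to \<open>[-1, 1]\<close>, bounds its
  leading coefficient \<open>c\<^sup>q / (2 A\<^sup>q)\<close> by \<open>2\<^sup>q\<^sup>-\<^sup>1\<close>, i.e. \<open>c \<le> 2 A\<close>.\<close>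

section \<open>Solutions of the three-term recurrence\<close>

lemma map_poly_of_real_add: "map_poly of_real (p + q) = map_poly of_real p + map_poly of_real q"
  by (rule poly_eqI) (simp add: coeff_map_poly)

lemma map_poly_of_real_diff: "map_poly of_real (p - q) = map_poly of_real p - map_poly of_real q"
  by (rule poly_eqI) (simp add: coeff_map_poly)

lemma map_poly_of_real_smult: "map_poly of_real (smult c p) = smult (of_real c) (map_poly of_real p)"
  by (rule poly_eqI) (simp add: coeff_map_poly)

lemma map_poly_of_real_mult: "map_poly of_real (p * q) = map_poly of_real p * map_poly of_real q"
  by (rule poly_eqI) (simp add: coeff_map_poly coeff_mult)

lemma poly_map_poly_of_real_sq_minus_4:
  fixes z :: "'a::real_field"
  shows "poly (map_poly of_real (p\<^sup>2 - 4)) z = (poly (map_poly of_real p) z)\<^sup>2 - 4"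
  by (simp add: map_poly_of_real_diff map_poly_of_real_mult power2_eq_square numeral_poly
      map_poly_pCons)

lemma poly_map_poly_of_real_of_real:
  "poly (map_poly of_real p) (of_real x :: 'a::real_field) = of_real (poly p x)"
  by (induction p) (simp_all add: map_poly_pCons)

definition jacobi_solution :: "(int \<Rightarrow> real) \<Rightarrow> (int \<Rightarrow> real) \<Rightarrow> 'a::real_field \<Rightarrow> (nat \<Rightarrow> 'a) \<Rightarrow> bool"
  where "jacobi_solution a b z psi \<longleftrightarrow>
    (\<forall>k. of_real (a (int k)) * psi k + of_real (b (int k + 1)) * psi (Suc k)
         + of_real (a (int k + 1)) * psi (Suc (Suc k)) = z * psi (Suc k))"

lemma jacobi_solution_lincomb:
  assumes "jacobi_solution a b z u" "jacobi_solution a b z v"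
  shows "jacobi_solution a b z (\<lambda>n. c * u n + d * v n)"
  unfolding jacobi_solution_def
proof
  fix k
  let ?L = "\<lambda>w. of_real (a (int k)) * w k + of_real (b (int k + 1)) * w (Suc k)
         + of_real (a (int k + 1)) * w (Suc (Suc k))"
  have "?L (\<lambda>n. c * u n + d * v n) = c * ?L u + d * ?L v"
    by (simp add: algebra_simps)
  also have "\<dots> = z * (c * u (Suc k) + d * v (Suc k))"
    using assms by (simp add: jacobi_solution_def algebra_simps)
  finally show "?L (\<lambda>n. c * u n + d * v n) = z * (c * u (Suc k) + d * v (Suc k))" .
qed

lemma jacobi_solution_cnj:
  "jacobi_solution a b z psi \<Longrightarrow> jacobi_solution a b (cnj z) (\<lambda>n. cnj (psi n))"
  unfolding jacobi_solution_def
proof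
  fix k
  assume "\<forall>k. of_real (a (int k)) * psi k + of_real (b (int k + 1)) * psi (Suc k)
         + of_real (a (int k + 1)) * psi (Suc (Suc k)) = z * psi (Suc k)"
  then show "of_real (a (int k)) * cnj (psi k) + of_real (b (int k + 1)) * cnj (psi (Suc k))
         + of_real (a (int k + 1)) * cnj (psi (Suc (Suc k))) = cnj z * cnj (psi (Suc k))"
    by (metis complex_cnj_add complex_cnj_mult complex_cnj_complex_of_real)
qed

lemma jacobi_solution_jsol:
  assumes "\<And>n. a n \<noteq> 0"
  shows "jacobi_solution a b z (\<lambda>n. poly (map_poly of_real (jsol a b p0 p1 n)) z)"
  unfolding jacobi_solution_def
proof
  fix k
  have "poly (map_poly of_real (jsol a b p0 p1 (Suc (Suc k)))) z
      = of_real (1 / a (int k + 1)) *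
        ((z - of_real (b (int k + 1))) * poly (map_poly of_real (jsol a b p0 p1 (Suc k))) z
         - of_real (a (int k)) * poly (map_poly of_real (jsol a b p0 p1 k)) z)"
    unfolding jsol.simps map_poly_of_real_smult map_poly_of_real_diff map_poly_of_real_mult
    by (simp add: map_poly_pCons algebra_simps)
  then have "of_real (a (int k + 1)) * poly (map_poly of_real (jsol a b p0 p1 (Suc (Suc k)))) z
      = (z - of_real (b (int k + 1))) * poly (map_poly of_real (jsol a b p0 p1 (Suc k))) z
        - of_real (a (int k)) * poly (map_poly of_real (jsol a b p0 p1 k)) z"
    using assms[of "int k + 1"] by (simp add: of_real_divide)
  then show "of_real (a (int k)) * poly (map_poly of_real (jsol a b p0 p1 k)) z
      + of_real (b (int k + 1)) * poly (map_poly of_real (jsol a b p0 p1 (Suc k))) z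
      + of_real (a (int k + 1)) * poly (map_poly of_real (jsol a b p0 p1 (Suc (Suc k)))) z
      = z * poly (map_poly of_real (jsol a b p0 p1 (Suc k))) z"
    by (simp add: algebra_simps)
qed

lemma jacobi_solution_unique:
  assumes "\<And>n. a n \<noteq> 0" and "jacobi_solution a b z u" "jacobi_solution a b z v"
    and "u 0 = v 0" "u 1 = v 1"
  shows "u n = v n"
proof -
  have "u n = v n \<and> u (Suc n) = v (Suc n)"
  proof (induction n)
    case (Suc n)
    have "of_real (a (int n + 1)) * u (Suc (Suc n)) = of_real (a (int n + 1)) * v (Suc (Suc n))"
      using assms(2,3) Suc.IH unfolding jacobi_solution_def
      by (metis add_diff_cancel_left')
    then show ?case using Suc.IH assms(1)[of "int n + 1"] by simp
  qed (use assms(4,5) in simp)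
  then show ?thesis ..
qed

lemma jacobi_solution_expansion:
  assumes "\<And>n. a n \<noteq> 0" and "jacobi_solution a b z psi"
  shows "psi n = psi 0 * poly (map_poly of_real (jtheta a b n)) z
                 + psi 1 * poly (map_poly of_real (jphi a b n)) z"
  by (rule jacobi_solution_unique[OF assms(1,2) jacobi_solution_lincomb])
    (use jacobi_solution_jsol[OF assms(1)] in \<open>simp_all add: jtheta_def jphi_def\<close>)

definition jacobi_wronskian :: "(int \<Rightarrow> real) \<Rightarrow> (nat \<Rightarrow> 'a::real_field) \<Rightarrow> (nat \<Rightarrow> 'a) \<Rightarrow> nat \<Rightarrow> 'a"
  where "jacobi_wronskian a u v k = of_real (a (int k)) * (u k * v (Suc k) - u (Suc k) * v k)"

lemma jacobi_wronskian_step: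
  assumes "jacobi_solution a b z u" "jacobi_solution a b w v"
  shows "jacobi_wronskian a u v (Suc k) - jacobi_wronskian a u v k = (w - z) * u (Suc k) * v (Suc k)"
proof -
  have "jacobi_wronskian a u v (Suc k) - jacobi_wronskian a u v k
      = u (Suc k) * (of_real (a (int k)) * v k + of_real (a (int k + 1)) * v (Suc (Suc k)))
        - v (Suc k) * (of_real (a (int k)) * u k + of_real (a (int k + 1)) * u (Suc (Suc k)))"
    by (simp add: jacobi_wronskian_def algebra_simps)
  also have "\<dots> = u (Suc k) * (w - of_real (b (int k + 1))) * v (Suc k)
        - v (Suc k) * (z - of_real (b (int k + 1))) * u (Suc k)"
  proof -
    have "of_real (a (int k)) * u k + of_real (b (int k + 1)) * u (Suc k)
        + of_real (a (int k + 1)) * u (Suc (Suc k)) = z * u (Suc k)"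
      "of_real (a (int k)) * v k + of_real (b (int k + 1)) * v (Suc k)
        + of_real (a (int k + 1)) * v (Suc (Suc k)) = w * v (Suc k)"
      using assms unfolding jacobi_solution_def by blast+
    then have hu: "of_real (a (int k)) * u k + of_real (a (int k + 1)) * u (Suc (Suc k))
        = (z - of_real (b (int k + 1))) * u (Suc k)"
      and hv: "of_real (a (int k)) * v k + of_real (a (int k + 1)) * v (Suc (Suc k))
        = (w - of_real (b (int k + 1))) * v (Suc k)"
      by (simp_all add: algebra_simps)
    show ?thesis unfolding hu hv by (simp add: algebra_simps)
  qed
  finally show ?thesis by (simp add: algebra_simps)
qed

lemma jacobi_wronskian_telescope:
  assumes "jacobi_solution a b z u" "jacobi_solution a b w v"
  shows "jacobi_wronskian a u v n - jacobi_wronskian a u v 0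
         = (w - z) * (\<Sum>k<n. u (Suc k) * v (Suc k))"
  by (simp add: sum_lessThan_telescope[symmetric] jacobi_wronskian_step[OF assms]
      sum_distrib_left mult.assoc)

section \<open>Floquet solutions and reality of the band edges\<close>

lemma exists_nonzero_kernel_2x2_iff:
  fixes A B C E :: "'a::field"
  shows "(\<exists>u v. (u, v) \<noteq> (0, 0) \<and> A * u + B * v = 0 \<and> C * u + E * v = 0) \<longleftrightarrow> A * E - B * C = 0"
proof
  assume "\<exists>u v. (u, v) \<noteq> (0, 0) \<and> A * u + B * v = 0 \<and> C * u + E * v = 0"
  then obtain u v where uv: "(u, v) \<noteq> (0, 0)" "A * u + B * v = 0" "C * u + E * v = 0"
    by blast
  have "(A * E - B * C) * u = E * (A * u + B * v) - B * (C * u + E * v)"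
    and "(A * E - B * C) * v = A * (C * u + E * v) - C * (A * u + B * v)"
    by (simp_all add: algebra_simps)
  then have "(A * E - B * C) * u = 0" "(A * E - B * C) * v = 0"
    using uv(2,3) by simp_all
  then show "A * E - B * C = 0"
    using uv(1) by auto
next
  assume det: "A * E - B * C = 0"
  consider "A = 0" "B = 0" "C = 0" "E = 0" | "A = 0" "B = 0" "C \<noteq> 0 \<or> E \<noteq> 0"
    | "A \<noteq> 0 \<or> B \<noteq> 0"
    by blast
  then show "\<exists>u v. (u, v) \<noteq> (0, 0) \<and> A * u + B * v = 0 \<and> C * u + E * v = 0"
  proof cases
    case 1
    then show ?thesis by (intro exI[of _ 1] exI[of _ 0]) simp
  next
    case 2
    then show ?thesis by (intro exI[of _ E] exI[of _ "- C"]) (auto simp: algebra_simps)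
  next
    case 3
    then show ?thesis using det by (intro exI[of _ B] exI[of _ "- A"]) (auto simp: algebra_simps)
  qed
qed

lemma jtheta_jphi_wronskian:
  fixes z :: "'a::real_field"
  assumes "\<And>n. a n \<noteq> 0"
  shows "jacobi_wronskian a (\<lambda>n. poly (map_poly of_real (jtheta a b n)) z)
           (\<lambda>n. poly (map_poly of_real (jphi a b n)) z) n = of_real (a 0)"
proof -
  have "jacobi_solution a b z (\<lambda>n. poly (map_poly of_real (jtheta a b n)) z)"
    and "jacobi_solution a b z (\<lambda>n. poly (map_poly of_real (jphi a b n)) z)"
    unfolding jtheta_def jphi_def by (rule jacobi_solution_jsol[OF assms])+
  from jacobi_wronskian_telescope[OF this, of n] show ?thesis
    by (simp add: jacobi_wronskian_def jtheta_def jphi_def)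
qed

lemma floquet_solution_iff_monodromy_eigenvector:
  fixes a b :: "int \<Rightarrow> real" and z e :: "'a::real_field"
  assumes a_nz: "\<And>n. a n \<noteq> 0"
  defines "T n \<equiv> poly (map_poly of_real (jtheta a b n)) z"
    and "P n \<equiv> poly (map_poly of_real (jphi a b n)) z"
  shows "(\<exists>psi. jacobi_solution a b z psi \<and> (psi 0, psi 1) \<noteq> (0, 0)
                \<and> psi q = e * psi 0 \<and> psi (Suc q) = e * psi 1)
     \<longleftrightarrow> (\<exists>u v. (u, v) \<noteq> (0, 0) \<and> (T q - e) * u + P q * v = 0
                \<and> T (Suc q) * u + (P (Suc q) - e) * v = 0)"
proof
  assume "\<exists>psi. jacobi_solution a b z psi \<and> (psi 0, psi 1) \<noteq> (0, 0)
              \<and> psi q = e * psi 0 \<and> psi (Suc q) = e * psi 1"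
  then obtain psi where psi: "jacobi_solution a b z psi" "(psi 0, psi 1) \<noteq> (0, 0)"
      "psi q = e * psi 0" "psi (Suc q) = e * psi 1"
    by blast
  have "psi n = psi 0 * T n + psi 1 * P n" for n
    unfolding T_def P_def by (rule jacobi_solution_expansion[OF a_nz psi(1)])
  from this[of q] this[of "Suc q"] show "\<exists>u v. (u, v) \<noteq> (0, 0) \<and> (T q - e) * u + P q * v = 0
              \<and> T (Suc q) * u + (P (Suc q) - e) * v = 0"
    using psi(2-4) by (intro exI[of _ "psi 0"] exI[of _ "psi 1"]) (simp add: algebra_simps)
next
  assume "\<exists>u v. (u, v) \<noteq> (0, 0) \<and> (T q - e) * u + P q * v = 0
              \<and> T (Suc q) * u + (P (Suc q) - e) * v = 0"
  then obtain u v where uv: "(u, v) \<noteq> (0, 0)" "(T q - e) * u + P q * v = 0"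
      "T (Suc q) * u + (P (Suc q) - e) * v = 0"
    by blast
  have "jacobi_solution a b z (\<lambda>n. u * T n + v * P n)"
    unfolding T_def P_def jtheta_def jphi_def
    by (intro jacobi_solution_lincomb jacobi_solution_jsol[OF a_nz])
  moreover have "T 0 = 1" "T (Suc 0) = 0" "P 0 = 0" "P (Suc 0) = 1"
    by (simp_all add: T_def P_def jtheta_def jphi_def)
  ultimately show "\<exists>psi. jacobi_solution a b z psi \<and> (psi 0, psi 1) \<noteq> (0, 0)
              \<and> psi q = e * psi 0 \<and> psi (Suc q) = e * psi 1"
    using uv by (intro exI[of _ "\<lambda>n. u * T n + v * P n"]) (simp add: algebra_simps)
qed

text \<open>The monodromy matrix has determinant \<open>1\<close> (Wronskian), so it has the eigenvalue
  \<open>e = \<plusminus>1\<close> exactly when its trace \<open>D\<close> equals \<open>e + 1/e = 2 e\<close>.\<close>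
lemma floquet_solution_iff_discr:
  fixes z e :: "'a::real_field"
  assumes a_nz: "\<And>n. a n \<noteq> 0" and aq: "a (int q) = a 0" and e: "e * e = 1"
  shows "(\<exists>psi. jacobi_solution a b z psi \<and> (psi 0, psi 1) \<noteq> (0, 0)
                \<and> psi q = e * psi 0 \<and> psi (Suc q) = e * psi 1)
         \<longleftrightarrow> poly (map_poly of_real (discr a b q)) z = 2 * e"
proof -
  define T where "T n = poly (map_poly of_real (jtheta a b n)) z" for n
  define P where "P n = poly (map_poly of_real (jphi a b n)) z" for n
  have wronskian: "T q * P (Suc q) - T (Suc q) * P q = 1"
    using jtheta_jphi_wronskian[where a = a and b = b and z = z and n = q, OF a_nz] a_nz[of 0]
    by (simp add: jacobi_wronskian_def aq T_def P_def)
  have "(\<exists>psi. jacobi_solution a b z psi \<and> (psi 0, psi 1) \<noteq> (0, 0)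
                \<and> psi q = e * psi 0 \<and> psi (Suc q) = e * psi 1)
     \<longleftrightarrow> (\<exists>u v. (u, v) \<noteq> (0, 0) \<and> (T q - e) * u + P q * v = 0
                \<and> T (Suc q) * u + (P (Suc q) - e) * v = 0)"
    unfolding T_def P_def by (rule floquet_solution_iff_monodromy_eigenvector[OF a_nz])
  also have "\<dots> \<longleftrightarrow> (T q - e) * (P (Suc q) - e) - P q * T (Suc q) = 0"
    by (rule exists_nonzero_kernel_2x2_iff)
  also have "(T q - e) * (P (Suc q) - e) - P q * T (Suc q) = e * (2 * e - (P (Suc q) + T q))"
    using wronskian e by (simp add: algebra_simps)
  also have "\<dots> = 0 \<longleftrightarrow> poly (map_poly of_real (discr a b q)) z = 2 * e"
    using e by (auto simp: discr_def map_poly_of_real_add T_def P_def)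
  finally show ?thesis .
qed

text \<open>Self-adjointness: the Wronskian of a Floquet solution \<open>\<psi>\<close> and its conjugate takes the same
  value at \<open>0\<close> and \<open>q\<close>, so Green's identity gives \<open>(z - cnj z) \<Sum> |\<psi>\<^sub>k|\<^sup>2 = 0\<close>.\<close>
lemma discr_eq_pm2_imp_real:
  fixes z :: complex and eps :: real
  assumes "q \<ge> 1" and a_nz: "\<And>n. a n \<noteq> 0" and aq: "a (int q) = a 0"
    and eps: "eps * eps = 1" and D: "poly (map_poly of_real (discr a b q)) z = 2 * of_real eps"
  shows "z \<in> \<real>"
proof -
  have "of_real eps * of_real eps = (1 :: complex)"
    using eps by (metis of_real_1 of_real_mult)
  then obtain psi where sol: "jacobi_solution a b z psi" and nz: "(psi 0, psi 1) \<noteq> (0, 0)"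
      and psi_q: "psi q = of_real eps * psi 0" "psi (Suc q) = of_real eps * psi 1"
    using floquet_solution_iff_discr[OF a_nz aq, of "of_real eps" b z] D by blast
  define W where "W = jacobi_wronskian a psi (\<lambda>n. cnj (psi n))"
  have "W q - W 0 = (cnj z - z) * (\<Sum>k<q. psi (Suc k) * cnj (psi (Suc k)))"
    unfolding W_def by (rule jacobi_wronskian_telescope[OF sol jacobi_solution_cnj[OF sol]])
  moreover have "W q = of_real (eps * eps) * W 0"
    by (simp add: W_def jacobi_wronskian_def aq psi_q algebra_simps)
  then have "W q = W 0"
    using eps by simp
  moreover have "(\<Sum>k<q. psi (Suc k) * cnj (psi (Suc k))) = of_real (\<Sum>k<q. (cmod (psi (Suc k)))\<^sup>2)"
    by (simp flip: complex_norm_square)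
  ultimately have "(cnj z - z) * of_real (\<Sum>k<q. (cmod (psi (Suc k)))\<^sup>2) = 0"
    by simp
  moreover have "(\<Sum>k<q. (cmod (psi (Suc k)))\<^sup>2) \<noteq> 0"
  proof
    assume "(\<Sum>k<q. (cmod (psi (Suc k)))\<^sup>2) = 0"
    then have zero: "psi (Suc k) = 0" if "k < q" for k
      using that by (subst (asm) sum_nonneg_eq_0_iff) auto
    have "psi 1 = 0" "psi q = 0"
      using zero[of 0] zero[of "q - 1"] \<open>q \<ge> 1\<close> by simp_all
    then show False using nz psi_q eps by auto
  qed
  ultimately have "cnj z - z = 0"
    by (metis mult_eq_0_iff of_real_eq_0_iff)
  then show ?thesis by (simp add: Reals_cnj_iff)
qed

lemma discr_sq_minus_4_roots_real:
  fixes z :: complex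
  assumes "q \<ge> 1" and "\<And>n. a n \<noteq> 0" and "a (int q) = a 0"
    and "poly (map_poly of_real ((discr a b q)\<^sup>2 - 4)) z = 0"
  shows "z \<in> \<real>"
proof -
  have "(poly (map_poly of_real (discr a b q)) z - 2) * (poly (map_poly of_real (discr a b q)) z + 2) = 0"
    using assms(4) unfolding poly_map_poly_of_real_sq_minus_4
    by (simp add: algebra_simps power2_eq_square)
  then have "poly (map_poly of_real (discr a b q)) z = 2 * of_real 1
           \<or> poly (map_poly of_real (discr a b q)) z = 2 * of_real (- 1)"
    by (auto simp: add_eq_0_iff2)
  then show ?thesis
    using discr_eq_pm2_imp_real[OF assms(1-3), of 1 b z]
      discr_eq_pm2_imp_real[OF assms(1-3), of "- 1" b z] by auto
qed

section \<open>The band edges as sorted roots of \<open>D\<^sup>2 - 4\<close>\<close>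

lemma degree_coeff_jsol:
  assumes "degree p0 = 0" "degree p1 = 0"
  shows "degree (jsol a b p0 p1 n) \<le> n - 1
       \<and> coeff (jsol a b p0 p1 n) (n - 1)
           = (if n = 0 then coeff p0 0 else coeff p1 0 / (\<Prod>k=1..n-1. a (int k)))"
  using assms
proof (induction a b p0 p1 n rule: jsol.induct)
  case (3 a b p0 p1 k)
  let ?J0 = "jsol a b p0 p1 k" and ?J1 = "jsol a b p0 p1 (Suc k)"
  have J: "jsol a b p0 p1 (Suc (Suc k))
      = smult (1 / a (int k + 1)) (smult (- b (int k + 1)) ?J1 + pCons 0 ?J1 - smult (a (int k)) ?J0)"
    by simp
  note IH1 = "3.IH"(1)[OF "3.prems"] and IH0 = "3.IH"(2)[OF "3.prems"]
  have deg0: "degree ?J0 \<le> k" and deg1: "degree ?J1 \<le> k"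
    using IH0 IH1 by auto
  have zero: "coeff ?J1 (Suc k) = 0" "coeff ?J0 (Suc k) = 0"
    using deg0 deg1 by (simp_all add: coeff_eq_0)
  have "degree (smult (- b (int k + 1)) ?J1 + pCons 0 ?J1 - smult (a (int k)) ?J0) \<le> Suc k"
  proof (intro degree_diff_le degree_add_le)
    show "degree (smult (- b (int k + 1)) ?J1) \<le> Suc k"
      using deg1 by simp
    show "degree (pCons 0 ?J1) \<le> Suc k"
      using le_trans[OF degree_pCons_le] deg1 by simp
    show "degree (smult (a (int k)) ?J0) \<le> Suc k"
      using deg0 by simp
  qed
  then have "degree (jsol a b p0 p1 (Suc (Suc k))) \<le> Suc k"
    unfolding J by simp
  moreover have "coeff (jsol a b p0 p1 (Suc (Suc k))) (Suc k) = coeff ?J1 k / a (int k + 1)"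
    unfolding J using zero by simp
  moreover have "coeff ?J1 k / a (int k + 1) = coeff p1 0 / (\<Prod>i=1..Suc k. a (int i))"
    using IH1 by (simp add: add.commute)
  ultimately show ?case
    by (simp del: jsol.simps)
qed auto

lemma degree_lead_coeff_discr:
  assumes "\<And>n. a n \<noteq> 0" "q \<ge> 1"
  shows "degree (discr a b q) = q" "lead_coeff (discr a b q) = 1 / (\<Prod>k=1..q. a (int k))"
proof -
  have phi: "degree (jphi a b (Suc q)) \<le> q"
      "coeff (jphi a b (Suc q)) q = 1 / (\<Prod>k=1..q. a (int k))"
    using degree_coeff_jsol[of 0 1 a b "Suc q"] by (simp_all add: jphi_def)
  have theta: "degree (jtheta a b q) \<le> q - 1"
    using degree_coeff_jsol[of 1 0 a b q] by (simp add: jtheta_def)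
  have c: "coeff (discr a b q) q = 1 / (\<Prod>k=1..q. a (int k))"
    using phi(2) theta assms(2) by (simp add: discr_def coeff_eq_0)
  have "degree (discr a b q) \<le> q"
    using phi(1) theta unfolding discr_def by (intro degree_add_le) auto
  moreover have "coeff (discr a b q) q \<noteq> 0"
    using c assms(1) by simp
  ultimately show "degree (discr a b q) = q"
    using le_degree le_antisym by blast
  then show "lead_coeff (discr a b q) = 1 / (\<Prod>k=1..q. a (int k))"
    using c by simp
qed

lemma proots_linear_factors: "proots (\<Prod>x\<leftarrow>xs. [:- x, 1:]) = mset (xs :: 'a::idom list)"
proof (induction xs)
  case (Cons x xs)
  have "(\<Prod>y\<leftarrow>xs. [:- y, 1:]) \<noteq> 0"
    by (auto simp: prod_list_zero_iff)
  then have "proots ([:- x, 1:] * (\<Prod>y\<leftarrow>xs. [:- y, 1:])) = {#x#} + mset xs"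
    using proots_linear_factor[of "- x"] Cons.IH by (simp add: proots_mult del: mult_pCons_left)
  then show ?case by simp
qed simp

lemma real_poly_splits:
  fixes p :: "real poly"
  assumes "p \<noteq> 0" and real_roots: "\<And>z :: complex. poly (map_poly of_real p) z = 0 \<Longrightarrow> z \<in> \<real>"
  shows "\<exists>xs. length xs = degree p \<and> p = smult (lead_coeff p) (\<Prod>x\<leftarrow>xs. [:- x, 1:])"
  using assms
proof (induction "degree p" arbitrary: p rule: less_induct)
  case less
  show ?case
  proof (cases "degree p = 0")
    case True
    then show ?thesis by (intro exI[of _ "[]"]) (auto elim: degree_eq_zeroE)
  next
    case False
    then have "\<not> constant (poly (map_poly complex_of_real p))"
      by (simp add: constant_degree degree_map_poly)
    then obtain z where z: "poly (map_poly complex_of_real p) z = 0"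
      using fundamental_theorem_of_algebra by blast
    have "z \<in> \<real>"
      using less.prems(2) z by blast
    then obtain x where "z = of_real x"
      by (auto elim: Reals_cases)
    then have "poly p x = 0"
      using z by (metis of_real_eq_0_iff poly_map_poly_of_real_of_real)
    then obtain r where p: "p = [:- x, 1:] * r"
      using poly_eq_0_iff_dvd by blast
    have r: "r \<noteq> 0"
      using p less.prems(1) by auto
    have "degree p = degree [:- x, 1:] + degree r"
      unfolding p by (rule degree_mult_eq) (use r in auto)
    then have degree_p: "degree p = Suc (degree r)"
      by simp
    have "w \<in> \<real>" if "poly (map_poly complex_of_real r) w = 0" for w
      using less.prems(2)[of w] that unfolding p map_poly_of_real_mult by simp
    then obtain ys where ys: "length ys = degree r" "r = smult (lead_coeff r) (\<Prod>y\<leftarrow>ys. [:- y, 1:])"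
      using less.hyps[of r] r degree_p by auto
    define c where "c = lead_coeff r"
    have p_eq: "p = smult c (\<Prod>y\<leftarrow>x # ys. [:- y, 1:])"
      using p ys(2) unfolding c_def[symmetric] by (simp add: mult_smult_right)
    have "lead_coeff p = c"
      unfolding p lead_coeff_mult c_def by simp
    show ?thesis
    proof (intro exI conjI)
      show "length (x # ys) = degree p"
        using ys(1) degree_p by simp
      show "p = smult (lead_coeff p) (\<Prod>y\<leftarrow>x # ys. [:- y, 1:])"
        unfolding \<open>lead_coeff p = c\<close> by (rule p_eq)
    qed
  qed
qed

lemma sorted_roots_eqI:
  assumes "p \<noteq> 0" and p: "p = smult (lead_coeff p) (\<Prod>x\<leftarrow>xs. [:- x, 1:])"
  shows "sorted_roots p = sort xs"
  unfolding sorted_roots_def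
proof (rule the_equality)
  have "(\<Prod>x\<leftarrow>sort xs. [:- x, 1:]) = (\<Prod>x\<leftarrow>xs. [:- x, 1:])"
    by (simp flip: prod_mset_prod_list add: mset_map)
  then show "sorted (sort xs) \<and> p = smult (lead_coeff p) (\<Prod>x\<leftarrow>sort xs. [:- x, 1:])"
    using p by simp
next
  fix ys
  assume ys: "sorted ys \<and> p = smult (lead_coeff p) (\<Prod>x\<leftarrow>ys. [:- x, 1:])"
  have "lead_coeff p \<noteq> 0"
    using assms(1) by simp
  have "mset ys = proots p"
    using arg_cong[OF conjunct2[OF ys], of proots] \<open>lead_coeff p \<noteq> 0\<close>
    by (simp add: proots_linear_factors)
  also have "\<dots> = mset xs"
    using arg_cong[OF p, of proots] \<open>lead_coeff p \<noteq> 0\<close>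
    by (simp add: proots_linear_factors)
  finally show "ys = sort xs"
    using ys properties_for_sort by metis
qed

lemma sorted_roots_discr_sq_minus_4:
  fixes a b :: "int \<Rightarrow> real"
  assumes "q \<ge> 1" and a_nz: "\<And>n. a n \<noteq> 0" and "a (int q) = a 0"
  defines "r \<equiv> sorted_roots ((discr a b q)\<^sup>2 - 4)"
  shows "sorted r" "length r = 2 * q"
    "(discr a b q)\<^sup>2 - 4 = smult ((1 / (\<Prod>k=1..q. a (int k)))\<^sup>2) (\<Prod>x\<leftarrow>r. [:- x, 1:])"
proof -
  define D where "D = discr a b q"
  define L where "L = 1 / (\<Prod>k=1..q. a (int k))"
  have "L \<noteq> 0"
    using a_nz by (simp add: L_def)
  have D: "degree D = q" "lead_coeff D = L"
    unfolding D_def L_def using degree_lead_coeff_discr[OF a_nz \<open>q \<ge> 1\<close>] by simp_all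
  then have "D \<noteq> 0"
    using \<open>q \<ge> 1\<close> by auto
  have D2: "degree (D\<^sup>2) = 2 * q" "lead_coeff (D\<^sup>2) = L\<^sup>2"
    using D \<open>D \<noteq> 0\<close> by (simp add: degree_power_eq, simp only: lead_coeff_power)
  have deg4: "degree (- 4 :: real poly) < degree (D\<^sup>2)"
    using D2 \<open>q \<ge> 1\<close> by simp
  have G: "degree (D\<^sup>2 - 4) = 2 * q" "lead_coeff (D\<^sup>2 - 4) = L\<^sup>2"
    using degree_add_eq_left[OF deg4] lead_coeff_add_le[OF deg4] D2 by simp_all
  then have "D\<^sup>2 - 4 \<noteq> 0"
    using \<open>L \<noteq> 0\<close> by auto
  moreover have "z \<in> \<real>" if "poly (map_poly of_real (D\<^sup>2 - 4)) z = 0" for z :: complex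
    using discr_sq_minus_4_roots_real[OF assms(1-3)] that by (simp add: D_def)
  ultimately obtain xs where xs: "length xs = 2 * q"
      "D\<^sup>2 - 4 = smult (lead_coeff (D\<^sup>2 - 4)) (\<Prod>x\<leftarrow>xs. [:- x, 1:])"
    using real_poly_splits G(1) by metis
  have r: "r = sort xs"
    unfolding r_def D_def[symmetric] by (rule sorted_roots_eqI[OF \<open>D\<^sup>2 - 4 \<noteq> 0\<close> xs(2)])
  show "sorted r" "length r = 2 * q"
    using xs(1) by (simp_all add: r)
  have "(\<Prod>x\<leftarrow>r. [:- x, 1:]) = (\<Prod>x\<leftarrow>xs. [:- x, 1:])"
    unfolding r by (simp flip: prod_mset_prod_list)
  then show "(discr a b q)\<^sup>2 - 4 = smult ((1 / (\<Prod>k=1..q. a (int k)))\<^sup>2) (\<Prod>x\<leftarrow>r. [:- x, 1:])"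
    using xs(2) G(2) by (simp add: D_def L_def)
qed

lemma poly_linear_factors_nth:
  "poly (\<Prod>x\<leftarrow>xs. [:- x, 1:]) y = (\<Prod>i<length xs. y - xs ! i :: 'a::comm_ring_1)"
proof (induction xs)
  case (Cons x xs)
  have "poly (\<Prod>z\<leftarrow>x # xs. [:- z, 1:]) y = (y - x) * poly (\<Prod>z\<leftarrow>xs. [:- z, 1:]) y"
    by (simp add: algebra_simps del: mult_pCons_left)
  then show ?case
    unfolding Cons.IH by (simp add: prod.lessThan_Suc_shift del: prod.lessThan_Suc)
qed simp

lemma poly_linear_factors_eq_0_iff:
  "poly (\<Prod>x\<leftarrow>xs. [:- x, 1:]) y = 0 \<longleftrightarrow> y \<in> set (xs :: 'a::idom list)"
  unfolding poly_linear_factors_nth in_set_conv_nth by auto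

lemma prod_lessThan_odd_pairs:
  "(\<Prod>i<Suc (2 * k). f i) = f 0 * (\<Prod>m<k. f (2 * m + 1) * f (2 * m + 2))"
  by (induction k) (simp_all add: algebra_simps)

lemma poly_linear_factors_nonpos:
  fixes r :: "real list"
  assumes "length r = 2 * q" "q \<ge> 1"
    and pairs: "\<And>m. m + 1 < q \<Longrightarrow> r ! (2 * m + 1) = r ! (2 * m + 2)"
    and "r ! 0 \<le> x" "x \<le> r ! (2 * q - 1)"
  shows "poly (\<Prod>y\<leftarrow>r. [:- y, 1:]) x \<le> 0"
proof -
  define f where "f i = x - r ! i" for i
  have "2 * q = Suc (Suc (2 * (q - 1)))" "2 * q - 1 = Suc (2 * (q - 1))"
    using \<open>q \<ge> 1\<close> by simp_all
  then have "poly (\<Prod>y\<leftarrow>r. [:- y, 1:]) x = (\<Prod>i<Suc (2 * (q - 1)). f i) * f (2 * q - 1)"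
    unfolding poly_linear_factors_nth assms(1) f_def[symmetric] by simp
  also have "\<dots> = (f 0 * f (2 * q - 1)) * (\<Prod>m<q - 1. f (2 * m + 1) * f (2 * m + 2))"
    unfolding prod_lessThan_odd_pairs by (simp add: algebra_simps)
  also have "\<dots> \<le> 0"
  proof (rule mult_nonpos_nonneg)
    show "f 0 * f (2 * q - 1) \<le> 0"
      using assms(4,5) by (simp add: f_def mult_nonneg_nonpos)
    show "0 \<le> (\<Prod>m<q - 1. f (2 * m + 1) * f (2 * m + 2))"
      using pairs by (intro prod_nonneg) (simp add: f_def)
  qed
  finally show ?thesis .
qed

lemma poly_discr_sq_minus_4:
  fixes a b :: "int \<Rightarrow> real"
  assumes "q \<ge> 1" and "\<And>n. a n \<noteq> 0" and "a (int q) = a 0"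
  shows "poly ((discr a b q)\<^sup>2 - 4) x = (1 / (\<Prod>k=1..q. a (int k)))\<^sup>2
           * poly (\<Prod>y\<leftarrow>sorted_roots ((discr a b q)\<^sup>2 - 4). [:- y, 1:]) x"
  by (subst sorted_roots_discr_sq_minus_4(3)[OF assms]) simp

lemma discr_roots_within_spectrum:
  fixes a b :: "int \<Rightarrow> real"
  assumes "q \<ge> 1" and a_nz: "\<And>n. a n \<noteq> 0" and "a (int q) = a 0"
    and "poly ((discr a b q)\<^sup>2 - 4) x = 0"
  shows "edge_plus a b q 0 \<le> x \<and> x \<le> edge_minus a b q q"
proof -
  define r where "r = sorted_roots ((discr a b q)\<^sup>2 - 4)"
  note r = sorted_roots_discr_sq_minus_4(1,2)[OF assms(1-3), of b, folded r_def]
  have "x \<in> set r"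
    using assms(4) a_nz unfolding poly_discr_sq_minus_4[OF assms(1-3)]
    by (simp add: poly_linear_factors_eq_0_iff r_def)
  then obtain i where "i < 2 * q" "x = r ! i"
    using r(2) by (auto simp: in_set_conv_nth)
  then show ?thesis
    using sorted_nth_mono[OF r(1), of 0 i] sorted_nth_mono[OF r(1), of i "2 * q - 1"] r(2)
    by (simp add: edge_plus_def edge_minus_def r_def[symmetric])
qed

lemma discr_bounded_if_gaps_closed:
  fixes a b :: "int \<Rightarrow> real"
  assumes "q \<ge> 1" and a_nz: "\<And>n. a n \<noteq> 0" and "a (int q) = a 0"
    and closed: "\<forall>m\<in>{1..q-1}. \<not> edge_minus a b q m < edge_plus a b q m"
    and "edge_plus a b q 0 \<le> x" "x \<le> edge_minus a b q q"
  shows "\<bar>poly (discr a b q) x\<bar> \<le> 2"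
proof -
  define r where "r = sorted_roots ((discr a b q)\<^sup>2 - 4)"
  note r = sorted_roots_discr_sq_minus_4(1,2)[OF assms(1-3), of b, folded r_def]
  have "r ! (2 * m + 1) = r ! (2 * m + 2)" if "m + 1 < q" for m
    using closed that sorted_nth_mono[OF r(1), of "2 * m + 1" "2 * m + 2"] r(2)
    by (auto simp: edge_minus_def edge_plus_def r_def[symmetric] dest!: bspec[of _ _ "Suc m"])
  then have "poly (\<Prod>y\<leftarrow>r. [:- y, 1:]) x \<le> 0"
    using poly_linear_factors_nonpos[OF r(2) \<open>q \<ge> 1\<close>] assms(5,6)
    by (simp add: edge_minus_def edge_plus_def r_def[symmetric])
  then have "(poly (discr a b q) x)\<^sup>2 - 4 \<le> 0"
    using poly_discr_sq_minus_4[OF assms(1-3), of b x]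
    by (simp add: r_def mult_nonneg_nonpos)
  then show ?thesis
    using abs_le_square_iff[of "poly (discr a b q) x" 2] by simp
qed

section \<open>Rayleigh quotients of symmetric matrices\<close>

definition quad_form :: "(nat \<Rightarrow> nat \<Rightarrow> real) \<Rightarrow> nat \<Rightarrow> (nat \<Rightarrow> real) \<Rightarrow> real"
  where "quad_form K q v = (\<Sum>i<q. \<Sum>j<q. K i j * v i * v j)"

definition sum_squares :: "nat \<Rightarrow> (nat \<Rightarrow> real) \<Rightarrow> real"
  where "sum_squares q v = (\<Sum>i<q. (v i)\<^sup>2)"

lemma sum_squares_eq_0_iff: "sum_squares q v = 0 \<longleftrightarrow> (\<forall>i<q. v i = 0)"
  unfolding sum_squares_def by (subst sum_nonneg_eq_0_iff) auto

lemma quad_form_scale: "quad_form K q (\<lambda>i. c * v i) = c\<^sup>2 * quad_form K q v"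
  unfolding quad_form_def by (simp add: sum_distrib_left power2_eq_square algebra_simps)

lemma sum_squares_scale: "sum_squares q (\<lambda>i. c * v i) = c\<^sup>2 * sum_squares q v"
  unfolding sum_squares_def by (simp add: sum_distrib_left power_mult_distrib)

lemma quad_form_cong: "(\<And>i. i < q \<Longrightarrow> v i = v' i) \<Longrightarrow> quad_form K q v = quad_form K q v'"
  unfolding quad_form_def by (intro sum.cong) auto

lemma sum_squares_cong: "(\<And>i. i < q \<Longrightarrow> v i = v' i) \<Longrightarrow> sum_squares q v = sum_squares q v'"
  unfolding sum_squares_def by (intro sum.cong) auto

lemma quad_form_attains_max_on_sphere:
  assumes "q \<ge> 1"
  obtains w where "sum_squares q w = 1"
    "\<And>u. sum_squares q u = 1 \<Longrightarrow> quad_form K q u \<le> quad_form K q w"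
proof -
  define B where "B = PiE UNIV (\<lambda>i::nat. if i < q then {-1..1::real} else {0})"
  define S where "S = B \<inter> {w. sum_squares q w = 1}"
  have "compactin (product_topology (\<lambda>i. euclidean) UNIV) B"
    unfolding B_def by (subst compactin_PiE) auto
  then have "compact B"
    by (metis compactin_euclidean_iff euclidean_product_topology)
  moreover have "closed {w. sum_squares q w = 1}"
    unfolding sum_squares_def
    by (intro closed_Collect_eq continuous_intros
        continuous_on_subset[OF continuous_on_product_coordinates]) auto
  ultimately have "compact S"
    unfolding S_def by (rule compact_Int_closed)
  have "(\<lambda>i. if i = 0 then 1 else 0) \<in> S"
    using assms by (auto simp: S_def B_def sum_squares_def PiE_def extensional_def
        power2_eq_square if_distrib sum.delta cong: if_cong)
  then obtain w where "w \<in> S" and w_max: "\<And>u. u \<in> S \<Longrightarrow> quad_form K q u \<le> quad_form K q w"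
    using continuous_attains_sup[OF \<open>compact S\<close>, of "quad_form K q"]
    unfolding quad_form_def
    by (fastforce intro: continuous_intros continuous_on_subset[OF continuous_on_product_coordinates])
  have "quad_form K q u \<le> quad_form K q w" if u: "sum_squares q u = 1" for u
  proof -
    define u' where "u' i = (if i < q then u i else 0)" for i
    have u': "quad_form K q u' = quad_form K q u" "sum_squares q u' = 1"
      using quad_form_cong[of q u' u K] sum_squares_cong[of q u' u] u by (simp_all add: u'_def)
    have "\<bar>u' i\<bar> \<le> 1" if "i < q" for i
    proof -
      have "(u' i)\<^sup>2 \<le> sum_squares q u'"
        unfolding sum_squares_def using that by (intro member_le_sum) auto
      then show ?thesis
        using u'(2) by (simp add: abs_square_le_1)
    qed
    then have "u' \<in> S"
      using u'(2) by (auto simp: S_def B_def PiE_def extensional_def u'_def abs_le_iff)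
    then show ?thesis
      using w_max u'(1) by metis
  qed
  then show ?thesis
    using that \<open>w \<in> S\<close> by (auto simp: S_def)
qed

lemma quad_form_max_attained:
  assumes "q \<ge> 1"
  obtains w where "sum_squares q w = 1"
    "\<And>v. quad_form K q v \<le> quad_form K q w * sum_squares q v"
proof -
  obtain w where w: "sum_squares q w = 1"
    "\<And>u. sum_squares q u = 1 \<Longrightarrow> quad_form K q u \<le> quad_form K q w"
    using quad_form_attains_max_on_sphere[OF assms] by blast
  have "quad_form K q v \<le> quad_form K q w * sum_squares q v" for v
  proof (cases "sum_squares q v = 0")
    case True
    then have "quad_form K q v = quad_form K q (\<lambda>_. 0)"
      by (intro quad_form_cong) (simp add: sum_squares_eq_0_iff)
    then show ?thesis
      using True by (simp add: quad_form_def)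
  next
    case False
    then have N: "sum_squares q v > 0"
      using sum_squares_def sum_nonneg[of "{..<q}" "\<lambda>i. (v i)\<^sup>2"] by simp
    define c where "c = 1 / sqrt (sum_squares q v)"
    have c2: "c\<^sup>2 * sum_squares q v = 1"
      using N by (simp add: c_def power_divide)
    then have "c\<^sup>2 * quad_form K q v \<le> quad_form K q w"
      using w(2)[of "\<lambda>i. c * v i"] by (simp add: quad_form_scale sum_squares_scale)
    have "quad_form K q v = (c\<^sup>2 * sum_squares q v) * quad_form K q v"
      by (simp only: c2 mult_1)
    also have "\<dots> = sum_squares q v * (c\<^sup>2 * quad_form K q v)"
      by (simp only: ac_simps)
    also have "\<dots> \<le> sum_squares q v * quad_form K q w"
      by (rule mult_left_mono) (use N \<open>c\<^sup>2 * quad_form K q v \<le> quad_form K q w\<close> in auto)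
    finally show ?thesis
      by (simp only: ac_simps)
  qed
  then show ?thesis
    using that w(1) by blast
qed

lemma linear_coeff_eq_0_if_quadratic_nonpos:
  fixes c d :: real
  assumes "\<And>t. t * c + t\<^sup>2 * d \<le> 0"
  shows "c = 0"
proof (rule ccontr)
  assume "c \<noteq> 0"
  define g where "g = \<bar>d\<bar> + 1"
  have "g > 0"
    by (simp add: g_def add_pos_nonneg)
  define t where "t = c / g"
  have "- (t\<^sup>2 * \<bar>d\<bar>) \<le> t\<^sup>2 * d"
    using mult_left_mono[of "- \<bar>d\<bar>" d "t\<^sup>2"] by simp
  moreover have "t * c - t\<^sup>2 * \<bar>d\<bar> = c\<^sup>2 * (g - \<bar>d\<bar>) / g\<^sup>2"
    using \<open>g > 0\<close> by (simp add: t_def field_simps power2_eq_square)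
  then have "t * c - t\<^sup>2 * \<bar>d\<bar> = c\<^sup>2 / g\<^sup>2"
    by (simp add: g_def)
  moreover have "c\<^sup>2 / g\<^sup>2 > 0"
    using \<open>c \<noteq> 0\<close> \<open>g > 0\<close> by simp
  ultimately have "t * c + t\<^sup>2 * d > 0"
    by linarith
  then show False
    using assms[of t] by simp
qed

lemma quad_form_add_unit:
  assumes sym: "\<And>i j. i < q \<Longrightarrow> j < q \<Longrightarrow> K i j = K j i" and "k < q"
  shows "quad_form K q (\<lambda>i. w i + t * of_bool (i = k))
    = quad_form K q w + t * (2 * (\<Sum>j<q. K k j * w j)) + t\<^sup>2 * K k k"
proof -
  define e where "e i = (of_bool (i = k) :: real)" for i
  have expand: "quad_form K q (\<lambda>i. w i + t * e i) = quad_form K q w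
      + t * (\<Sum>i<q. \<Sum>j<q. K i j * w i * e j) + t * (\<Sum>i<q. \<Sum>j<q. K i j * e i * w j)
      + t\<^sup>2 * (\<Sum>i<q. \<Sum>j<q. K i j * e i * e j)"
    by (simp add: quad_form_def algebra_simps sum.distrib sum_distrib_left power2_eq_square)
  have "(\<Sum>i<q. \<Sum>j<q. K i j * w i * e j) = (\<Sum>i<q. K i k * w i)"
    using \<open>k < q\<close> by (simp add: e_def Int_insert_right)
  also have "\<dots> = (\<Sum>j<q. K k j * w j)"
    using sym \<open>k < q\<close> by (intro sum.cong) auto
  finally have s1: "(\<Sum>i<q. \<Sum>j<q. K i j * w i * e j) = (\<Sum>j<q. K k j * w j)" .
  have "(\<Sum>i<q. \<Sum>j<q. K i j * e i * w j) = (\<Sum>i<q. e i * (\<Sum>j<q. K i j * w j))"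
    by (simp add: sum_distrib_left ac_simps)
  also have "\<dots> = (\<Sum>j<q. K k j * w j)"
    using \<open>k < q\<close> by (simp add: e_def Int_insert_right)
  finally have s2: "(\<Sum>i<q. \<Sum>j<q. K i j * e i * w j) = (\<Sum>j<q. K k j * w j)" .
  have "(\<Sum>i<q. \<Sum>j<q. K i j * e i * e j) = (\<Sum>i<q. e i * (\<Sum>j<q. K i j * e j))"
    by (simp add: sum_distrib_left ac_simps)
  also have "\<dots> = K k k"
    using \<open>k < q\<close> by (simp add: e_def Int_insert_right)
  finally have s3: "(\<Sum>i<q. \<Sum>j<q. K i j * e i * e j) = K k k" .
  have "quad_form K q (\<lambda>i. w i + t * e i)
      = quad_form K q w + t * (2 * (\<Sum>j<q. K k j * w j)) + t\<^sup>2 * K k k"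
    unfolding expand s1 s2 s3 by simp
  then show ?thesis
    by (simp add: e_def)
qed

lemma sum_squares_add_unit:
  assumes "k < q"
  shows "sum_squares q (\<lambda>i. w i + t * of_bool (i = k)) = sum_squares q w + t * (2 * w k) + t\<^sup>2"
proof -
  define e where "e i = (of_bool (i = k) :: real)" for i
  have "sum_squares q (\<lambda>i. w i + t * e i)
      = sum_squares q w + t * (2 * (\<Sum>i<q. w i * e i)) + t\<^sup>2 * (\<Sum>i<q. e i * e i)"
    by (simp add: sum_squares_def power2_eq_square algebra_simps sum.distrib sum_distrib_left)
  moreover have "(\<Sum>i<q. w i * e i) = w k" "(\<Sum>i<q. e i * e i) = 1"
    using \<open>k < q\<close> by (simp_all add: e_def Int_insert_right)
  ultimately show ?thesis
    by (simp add: e_def)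
qed

lemma quad_form_maximizer_eigenvector:
  assumes sym: "\<And>i j. i < q \<Longrightarrow> j < q \<Longrightarrow> K i j = K j i"
    and le: "\<And>v. quad_form K q v \<le> lam * sum_squares q v"
    and eq: "quad_form K q w = lam * sum_squares q w" and "k < q"
  shows "(\<Sum>j<q. K k j * w j) = lam * w k"
proof -
  have bound: "quad_form K q w + t * (2 * (\<Sum>j<q. K k j * w j)) + t\<^sup>2 * K k k
      \<le> lam * (sum_squares q w + t * (2 * w k) + t\<^sup>2)" for t
    using le[of "\<lambda>i. w i + t * of_bool (i = k)"]
    by (simp only: quad_form_add_unit[OF sym \<open>k < q\<close>] sum_squares_add_unit[OF \<open>k < q\<close>])
  have "t * (2 * ((\<Sum>j<q. K k j * w j) - lam * w k)) + t\<^sup>2 * (K k k - lam) \<le> 0" for t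
    using bound[of t] eq by (simp add: algebra_simps)
  then show ?thesis
    using linear_coeff_eq_0_if_quadratic_nonpos by fastforce
qed

section \<open>Periodic and antiperiodic eigenvalues\<close>

lemma periodic_mod:
  fixes f :: "int \<Rightarrow> 'a"
  assumes per: "\<forall>n. f (n + int q) = f n"
  shows "f n = f (n mod int q)"
proof -
  have shift: "f (m + int q * j) = f m" for m j
  proof (induction j rule: int_induct[where k = 0])
    case (step1 j)
    then show ?case
      using per[rule_format, of "m + int q * j"] by (simp add: algebra_simps)
  next
    case (step2 j)
    then show ?case
      using per[rule_format, of "m + int q * (j - 1)"] by (simp add: algebra_simps)
  qed simp
  show ?thesis
    using shift[of "n mod int q" "n div int q"] by simp
qed

lemma periodic_nat_mod:
  "\<forall>n. f (n + int q) = f n \<Longrightarrow> f (int (k mod q)) = f (int k)"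
  by (simp add: zmod_int periodic_mod[of f q "int k"])

lemma periodic_const_on_nat:
  assumes "\<forall>n. f (n + int q) = f n" "q \<ge> 1" "\<And>k. f (int k) = c"
  shows "f n = c"
proof -
  have "n mod int q = int (nat (n mod int q))"
    using \<open>q \<ge> 1\<close> by simp
  then show ?thesis
    using periodic_mod[OF assms(1), of n] assms(3) by metis
qed

lemma Suc_mod_inj: "j < q \<Longrightarrow> m < q \<Longrightarrow> Suc j mod q = Suc m mod q \<Longrightarrow> j = m"
  by (simp add: mod_Suc split: if_splits)

text \<open>\<open>H\<close> restricted to \<open>q\<close>-periodic sequences, as a symmetric matrix on one period.\<close>
definition cyclic_jacobi :: "(int \<Rightarrow> real) \<Rightarrow> (int \<Rightarrow> real) \<Rightarrow> nat \<Rightarrow> nat \<Rightarrow> nat \<Rightarrow> real"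
  where "cyclic_jacobi a b q i j =
    b (int i) * of_bool (j = i) + a (int i) * of_bool (j = Suc i mod q)
    + a (int j) * of_bool (i = Suc j mod q)"

lemma cyclic_jacobi_sym: "cyclic_jacobi a b q i j = cyclic_jacobi a b q j i"
  unfolding cyclic_jacobi_def by auto

lemma quad_form_cyclic_jacobi:
  assumes "q > 0"
  shows "quad_form (cyclic_jacobi a b q) q v
    = (\<Sum>i<q. b (int i) * (v i)\<^sup>2) + 2 * (\<Sum>i<q. a (int i) * v i * v (Suc i mod q))"
proof -
  have swap: "(\<Sum>i<q. \<Sum>j<q. (a (int j) * v i * v j) * of_bool (i = Suc j mod q))
      = (\<Sum>j<q. \<Sum>i<q. (a (int j) * v i * v j) * of_bool (i = Suc j mod q))"
    by (rule sum.swap)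
  have "quad_form (cyclic_jacobi a b q) q v
      = (\<Sum>i<q. \<Sum>j<q. (b (int i) * v i * v j) * of_bool (j = i))
      + (\<Sum>i<q. \<Sum>j<q. (a (int i) * v i * v j) * of_bool (j = Suc i mod q))
      + (\<Sum>j<q. \<Sum>i<q. (a (int j) * v i * v j) * of_bool (i = Suc j mod q))"
    unfolding quad_form_def cyclic_jacobi_def swap[symmetric]
    by (simp add: sum.distrib algebra_simps)
  also have "\<dots> = (\<Sum>i<q. b (int i) * v i * v i) + (\<Sum>i<q. a (int i) * v i * v (Suc i mod q))
      + (\<Sum>j<q. a (int j) * v (Suc j mod q) * v j)"
    using \<open>q > 0\<close> by (simp add: Int_insert_right)
  finally show ?thesis
    by (simp add: algebra_simps sum.distrib power2_eq_square)
qed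

lemma cyclic_jacobi_row:
  assumes "q > 0" and aper: "\<forall>n. a (n + int q) = a n" and bper: "\<forall>n. b (n + int q) = b n"
  shows "(\<Sum>j<q. cyclic_jacobi a b q (Suc k mod q) j * v j)
    = a (int k) * v (k mod q) + b (int k + 1) * v (Suc k mod q) + a (int k + 1) * v (Suc (Suc k) mod q)"
proof -
  define i where "i = Suc k mod q"
  have i: "i < q" "Suc i mod q = Suc (Suc k) mod q"
    using \<open>q > 0\<close> by (simp_all add: i_def mod_Suc_eq)
  have pred: "{..<q} \<inter> {j. i = Suc j mod q} = {k mod q}"
    using \<open>q > 0\<close> Suc_mod_inj[of _ q "k mod q"] by (auto simp: i_def mod_Suc_eq)
  have "(\<Sum>j<q. cyclic_jacobi a b q i j * v j)
      = (\<Sum>j<q. (b (int i) * v j) * of_bool (j = i))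
      + (\<Sum>j<q. (a (int i) * v j) * of_bool (j = Suc i mod q))
      + (\<Sum>j<q. (a (int j) * v j) * of_bool (i = Suc j mod q))"
    unfolding cyclic_jacobi_def by (simp add: sum.distrib algebra_simps)
  also have "\<dots> = b (int i) * v i + a (int i) * v (Suc i mod q) + a (int (k mod q)) * v (k mod q)"
    using i \<open>q > 0\<close> by (simp only: sum_mult_of_bool_eq finite_lessThan pred) (simp add: Int_insert_right)
  also have "\<dots> = a (int k) * v (k mod q) + b (int k + 1) * v (Suc k mod q)
      + a (int k + 1) * v (Suc (Suc k) mod q)"
    using periodic_nat_mod[OF aper, of k] periodic_nat_mod[OF aper, of "Suc k"]
      periodic_nat_mod[OF bper, of "Suc k"] i(2)
    by (simp add: i_def add.commute)
  finally show ?thesis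
    unfolding i_def .
qed

text \<open>For \<open>sig = -1\<close> the twist \<open>\<psi>\<^sub>n = (-1)\<^sup>n v\<^sub>n\<close> turns an eigenvector of the matrix with
  \<open>-b\<close> into an eigenvector of \<open>H\<close> with eigenvalue \<open>-lam\<close>, which is \<open>q\<close>-periodic or
  \<open>q\<close>-antiperiodic according to the parity of \<open>q\<close>.\<close>
lemma cyclic_jacobi_eigenvalue_root:
  assumes "q > 0" and a_nz: "\<And>n. a n \<noteq> 0"
    and aper: "\<forall>n. a (n + int q) = a n" and bper: "\<forall>n. b (n + int q) = b n"
    and sig: "sig * sig = 1"
    and eig: "\<And>i. i < q \<Longrightarrow> (\<Sum>j<q. cyclic_jacobi a (\<lambda>n. sig * b n) q i j * v j) = lam * v i"
    and "i < q" "v i \<noteq> 0"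
  shows "poly ((discr a b q)\<^sup>2 - 4) (sig * lam) = 0"
proof -
  define psi where "psi n = sig ^ n * v (n mod q)" for n
  have sig2: "sig * (sig * x) = x" for x
    using sig by (metis mult.assoc mult_1)
  have sig_pow: "sig ^ Suc (Suc k) = sig ^ k" for k
    using sig2[of "sig ^ k"] by simp
  have "jacobi_solution a b (sig * lam) psi"
    unfolding jacobi_solution_def of_real_eq_id id_def
  proof
    fix k
    have "sig ^ k * (a (int k) * v (k mod q) + sig * b (int k + 1) * v (Suc k mod q)
        + a (int k + 1) * v (Suc (Suc k) mod q)) = sig ^ k * (lam * v (Suc k mod q))"
      using eig[of "Suc k mod q"] cyclic_jacobi_row[OF \<open>q > 0\<close> aper, of "\<lambda>n. sig * b n" k v]
        bper \<open>q > 0\<close> by simp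
    then show "a (int k) * psi k + b (int k + 1) * psi (Suc k) + a (int k + 1) * psi (Suc (Suc k))
        = sig * lam * psi (Suc k)"
      by (simp add: psi_def sig_pow algebra_simps sig2)
  qed
  moreover have "(psi 0, psi 1) \<noteq> (0, 0)"
  proof
    assume "(psi 0, psi 1) = (0, 0)"
    then have "psi i = 0"
      using jacobi_solution_expansion[OF a_nz \<open>jacobi_solution a b (sig * lam) psi\<close>, of i] by simp
    then show False
      using \<open>i < q\<close> \<open>v i \<noteq> 0\<close> sig by (auto simp: psi_def)
  qed
  moreover have "psi q = sig ^ q * psi 0" "psi (Suc q) = sig ^ q * psi 1"
    using mod_Suc_eq[of q q] by (simp_all add: psi_def)
  moreover have "sig ^ q * sig ^ q = 1"
    using sig by (metis power_mult_distrib power_one)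
  moreover have "a (int q) = a 0"
    using aper[rule_format, of 0] by simp
  ultimately have "poly (discr a b q) (sig * lam) = 2 * sig ^ q"
    using floquet_solution_iff_discr[where a = a and q = q and e = "sig ^ q" and b = b
        and z = "sig * lam"] a_nz by auto
  then show ?thesis
    using \<open>sig ^ q * sig ^ q = 1\<close> by (simp add: power2_eq_square algebra_simps)
qed

lemma cyclic_jacobi_top_eigenvalue_root:
  assumes "q \<ge> 1" and a_nz: "\<And>n. a n \<noteq> 0"
    and aper: "\<forall>n. a (n + int q) = a n" and bper: "\<forall>n. b (n + int q) = b n"
    and sig: "sig * sig = 1"
  obtains lam where "poly ((discr a b q)\<^sup>2 - 4) (sig * lam) = 0"
    "\<And>v. quad_form (cyclic_jacobi a (\<lambda>n. sig * b n) q) q v \<le> lam * sum_squares q v"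
proof -
  let ?K = "cyclic_jacobi a (\<lambda>n. sig * b n) q"
  obtain w where w: "sum_squares q w = 1" "\<And>v. quad_form ?K q v \<le> quad_form ?K q w * sum_squares q v"
    using quad_form_max_attained[OF \<open>q \<ge> 1\<close>, of ?K] by blast
  have eig: "(\<Sum>j<q. ?K i j * w j) = quad_form ?K q w * w i" if "i < q" for i
    by (rule quad_form_maximizer_eigenvector[OF cyclic_jacobi_sym w(2)]) (use w(1) that in simp_all)
  obtain i where "i < q" "w i \<noteq> 0"
    using w(1) sum_squares_eq_0_iff[of q w] by auto
  show ?thesis
    by (rule that[OF cyclic_jacobi_eigenvalue_root[OF _ a_nz aper bper sig eig \<open>i < q\<close> \<open>w i \<noteq> 0\<close>]
        w(2)]) (use \<open>q \<ge> 1\<close> in simp_all)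
qed

section \<open>The test vector\<close>

lemma geo_mean_a_pos_pow:
  assumes "q \<ge> 1" and apos: "\<And>n. a n > 0"
  shows "geo_mean_a a q > 0" "geo_mean_a a q ^ q = (\<Prod>k=1..q. a (int k))"
proof -
  have "(\<Prod>i=1..int q. a i) = (\<Prod>k=1..q. a (int k))"
    using prod.reindex[of int "{1..q}" a] image_int_atLeastAtMost[of 1 q] by simp
  moreover have "(\<Prod>k=1..q. a (int k)) > 0"
    using apos by (intro prod_pos) auto
  ultimately show "geo_mean_a a q > 0" "geo_mean_a a q ^ q = (\<Prod>k=1..q. a (int k))"
    using \<open>q \<ge> 1\<close> by (simp_all add: geo_mean_a_def real_root_gt_zero real_root_pow_pos)
qed

lemma prod_periodic_shift:
  assumes "q \<ge> 1" and "a (int q) = a 0"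
  shows "(\<Prod>k=1..q. a (int k)) = (\<Prod>k<q. a (int k))"
proof -
  have "{1..q} = insert q {1..<q}" "{..<q} = insert 0 {1..<q}"
    using \<open>q \<ge> 1\<close> by auto
  then show ?thesis
    using assms(2) by simp
qed

text \<open>\<open>t\<^sub>k = A\<^sup>k / (a\<^sub>0 \<cdots> a\<^sub>k\<^sub>-\<^sub>1)\<close> solves \<open>a\<^sub>k t\<^sub>k\<^sub>+\<^sub>1 = A t\<^sub>k\<close>; it is \<open>q\<close>-periodic
  because \<open>a\<^sub>0 \<cdots> a\<^sub>q\<^sub>-\<^sub>1 = A\<^sup>q\<close>.\<close>
definition geo_vector :: "(int \<Rightarrow> real) \<Rightarrow> nat \<Rightarrow> nat \<Rightarrow> real"
  where "geo_vector a q k = geo_mean_a a q ^ k / (\<Prod>j<k. a (int j))"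

lemma geo_vector_pos: "q \<ge> 1 \<Longrightarrow> (\<And>n. a n > 0) \<Longrightarrow> geo_vector a q k > 0"
  unfolding geo_vector_def
  by (intro divide_pos_pos zero_less_power prod_pos geo_mean_a_pos_pow[of q a]) auto

lemma geo_vector_step:
  assumes "q \<ge> 1" and apos: "\<And>n. a n > 0" and aper: "\<forall>n. a (n + int q) = a n"
  shows "a (int k) * geo_vector a q (Suc k mod q) = geo_mean_a a q * geo_vector a q (k mod q)"
proof -
  define m where "m = k mod q"
  have m: "m < q" "Suc k mod q = Suc m mod q" "a (int k) = a (int m)"
    using \<open>q \<ge> 1\<close> periodic_nat_mod[OF aper, of k] by (simp_all add: m_def mod_Suc_eq)
  have prod_pos: "(\<Prod>j<n. a (int j)) > 0" for n
    using apos by (intro prod_pos) auto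
  have a_nz: "a n \<noteq> 0" for n
    using apos[of n] by simp
  show ?thesis
  proof (cases "Suc m < q")
    case True
    then show ?thesis
      using m prod_pos[of m] apos[of "int m"] by (simp add: geo_vector_def m_def[symmetric] field_simps)
  next
    case False
    then have "Suc m = q"
      using m(1) by simp
    then have "geo_mean_a a q * geo_vector a q m = a (int m)"
      using geo_mean_a_pos_pow[of q a, OF assms(1,2)] prod_pos[of m]
        prod_periodic_shift[of q a, OF \<open>q \<ge> 1\<close>] aper[rule_format, of 0] a_nz
      by (simp add: geo_vector_def field_simps \<open>Suc m = q\<close>[symmetric] flip: power_Suc)
    then show ?thesis
      using m \<open>Suc m = q\<close> by (simp add: geo_vector_def m_def[symmetric])
  qed
qed

lemma quad_form_cyclic_jacobi_geo_vector_sum: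
  assumes "q \<ge> 1" and "\<And>n. a n > 0" and "\<forall>n. a (n + int q) = a n"
  shows "quad_form (cyclic_jacobi a b q) q (geo_vector a q)
      + quad_form (cyclic_jacobi a (\<lambda>n. - b n) q) q (geo_vector a q)
    = 4 * geo_mean_a a q * sum_squares q (geo_vector a q)"
proof -
  have "a (int i) * geo_vector a q i * geo_vector a q (Suc i mod q)
      = geo_mean_a a q * (geo_vector a q i)\<^sup>2" if "i < q" for i
    using geo_vector_step[OF assms, of i] that by (simp add: power2_eq_square)
  then show ?thesis
    using \<open>q \<ge> 1\<close>
    by (simp add: quad_form_cyclic_jacobi sum_squares_def sum_distrib_left sum_negf mult.assoc)
qed

text \<open>Subtracting the two eigenvalue equations at site \<open>k + 1\<close> determines \<open>b\<close>; adding them gives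
  \<open>a\<^sub>k t\<^sub>k = A t\<^sub>k\<^sub>+\<^sub>1\<close>, which together with \<open>a\<^sub>k t\<^sub>k\<^sub>+\<^sub>1 = A t\<^sub>k\<close> forces \<open>a\<^sub>k = A\<close>.\<close>
lemma geo_vector_common_eigenvector_site:
  assumes "q \<ge> 1" and apos: "\<And>n. a n > 0"
    and aper: "\<forall>n. a (n + int q) = a n" and bper: "\<forall>n. b (n + int q) = b n"
    and eig1: "\<And>i. i < q \<Longrightarrow>
      (\<Sum>j<q. cyclic_jacobi a b q i j * geo_vector a q j) = lam1 * geo_vector a q i"
    and eig2: "\<And>i. i < q \<Longrightarrow>
      (\<Sum>j<q. cyclic_jacobi a (\<lambda>n. - b n) q i j * geo_vector a q j) = lam2 * geo_vector a q i"
    and lam: "lam1 + lam2 = 4 * geo_mean_a a q"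
  shows "a (int k) = geo_mean_a a q \<and> b (int k + 1) = (lam1 - lam2) / 2"
proof -
  define A where "A = geo_mean_a a q"
  define t where "t = geo_vector a q"
  define t0 t1 t2 where "t0 = t (k mod q)" and "t1 = t (Suc k mod q)" and "t2 = t (Suc (Suc k) mod q)"
  have "q > 0" "Suc k mod q < q"
    using \<open>q \<ge> 1\<close> by simp_all
  have "t0 > 0" "t1 > 0"
    using geo_vector_pos[of q a, OF \<open>q \<ge> 1\<close> apos] by (simp_all add: t0_def t1_def t_def)
  have r1: "a (int k) * t0 + b (int k + 1) * t1 + a (int k + 1) * t2 = lam1 * t1"
    using eig1[OF \<open>Suc k mod q < q\<close>] cyclic_jacobi_row[OF \<open>q > 0\<close> aper bper, of k t]
    by (simp add: t0_def t1_def t2_def t_def)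
  have r2: "a (int k) * t0 - b (int k + 1) * t1 + a (int k + 1) * t2 = lam2 * t1"
    using eig2[OF \<open>Suc k mod q < q\<close>] cyclic_jacobi_row[OF \<open>q > 0\<close> aper, of "\<lambda>n. - b n" k t] bper
    by (simp add: t0_def t1_def t2_def t_def)
  have s1: "a (int k + 1) * t2 = A * t1" and s2: "a (int k) * t1 = A * t0"
    using geo_vector_step[OF \<open>q \<ge> 1\<close> apos aper, of "Suc k"]
      geo_vector_step[OF \<open>q \<ge> 1\<close> apos aper, of k] mod_Suc_eq[of "Suc k" q]
    by (simp_all add: A_def t0_def t1_def t2_def t_def add.commute)
  have "2 * b (int k + 1) * t1 = (lam1 - lam2) * t1"
    using r1 r2 by (simp add: algebra_simps)
  then have b: "b (int k + 1) = (lam1 - lam2) / 2"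
    using \<open>t1 > 0\<close> by simp
  have "2 * (a (int k) * t0) + 2 * (a (int k + 1) * t2) = (lam1 + lam2) * t1"
    using r1 r2 by (simp add: algebra_simps)
  then have "2 * (a (int k) * t0) + 2 * (A * t1) = 4 * (A * t1)"
    unfolding s1 lam A_def by (simp add: algebra_simps)
  then have "a (int k) * t0 = A * t1"
    by simp
  then have "a (int k) * a (int k) * t0 = A * A * t0"
    using s2 by (metis mult.assoc mult.commute)
  then have "(a (int k))\<^sup>2 = A\<^sup>2"
    using \<open>t0 > 0\<close> by (simp add: power2_eq_square)
  then have "a (int k) = A"
    using power2_eq_iff_nonneg[of "a (int k)" A] apos[of "int k"]
      geo_mean_a_pos_pow(1)[of q a, OF \<open>q \<ge> 1\<close> apos]
    by (simp add: A_def)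
  with b show ?thesis
    by (simp add: A_def)
qed

lemma geo_vector_common_eigenvector_imp_constant:
  assumes "q \<ge> 1" and apos: "\<And>n. a n > 0"
    and aper: "\<forall>n. a (n + int q) = a n" and bper: "\<forall>n. b (n + int q) = b n"
    and eig1: "\<And>i. i < q \<Longrightarrow>
      (\<Sum>j<q. cyclic_jacobi a b q i j * geo_vector a q j) = lam1 * geo_vector a q i"
    and eig2: "\<And>i. i < q \<Longrightarrow>
      (\<Sum>j<q. cyclic_jacobi a (\<lambda>n. - b n) q i j * geo_vector a q j) = lam2 * geo_vector a q i"
    and lam: "lam1 + lam2 = 4 * geo_mean_a a q"
  shows "a n = geo_mean_a a q" "b n = (lam1 - lam2) / 2"
proof -
  note site = geo_vector_common_eigenvector_site[OF assms]
  show "a n = geo_mean_a a q"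
    using periodic_const_on_nat[OF aper \<open>q \<ge> 1\<close>] site by blast
  have "b (int k) = (lam1 - lam2) / 2" for k
  proof (cases k)
    case 0
    then have "b (int k) = b (int (q - 1) + 1)"
      using bper[rule_format, of 0] \<open>q \<ge> 1\<close> by simp
    then show ?thesis
      using site by simp
  next
    case (Suc m)
    then show ?thesis
      using site[of m] by (simp add: add.commute)
  qed
  then show "b n = (lam1 - lam2) / 2"
    by (rule periodic_const_on_nat[OF bper \<open>q \<ge> 1\<close>])
qed

lemma sum_squares_geo_vector_pos:
  assumes "q \<ge> 1" and "\<And>n. a n > 0"
  shows "sum_squares q (geo_vector a q) > 0"
proof -
  have "geo_vector a q i \<noteq> 0" for i
    using geo_vector_pos[of q a, OF assms] by (simp add: less_imp_neq[symmetric])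
  moreover have "0 \<in> {..<q}"
    using \<open>q \<ge> 1\<close> by simp
  ultimately show ?thesis
    unfolding sum_squares_def by (intro sum_pos) auto
qed

lemma geo_vector_eigenvector_if_rayleigh_tight:
  assumes "q \<ge> 1" and apos: "\<And>n. a n > 0" and aper: "\<forall>n. a (n + int q) = a n"
    and max1: "\<And>v. quad_form (cyclic_jacobi a b q) q v \<le> lam1 * sum_squares q v"
    and max2: "\<And>v. quad_form (cyclic_jacobi a (\<lambda>n. - b n) q) q v \<le> lam2 * sum_squares q v"
    and lam: "lam1 + lam2 = 4 * geo_mean_a a q"
  shows "\<And>i. i < q \<Longrightarrow>
      (\<Sum>j<q. cyclic_jacobi a b q i j * geo_vector a q j) = lam1 * geo_vector a q i"
    and "\<And>i. i < q \<Longrightarrow>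
      (\<Sum>j<q. cyclic_jacobi a (\<lambda>n. - b n) q i j * geo_vector a q j) = lam2 * geo_vector a q i"
proof -
  define t where "t = geo_vector a q"
  have "quad_form (cyclic_jacobi a b q) q t + quad_form (cyclic_jacobi a (\<lambda>n. - b n) q) q t
      = (lam1 + lam2) * sum_squares q t"
    unfolding t_def quad_form_cyclic_jacobi_geo_vector_sum[OF assms(1-3)] lam ..
  then have "quad_form (cyclic_jacobi a b q) q t + quad_form (cyclic_jacobi a (\<lambda>n. - b n) q) q t
      = lam1 * sum_squares q t + lam2 * sum_squares q t"
    by (simp add: distrib_right)
  then have eq1: "quad_form (cyclic_jacobi a b q) q t = lam1 * sum_squares q t"
    and eq2: "quad_form (cyclic_jacobi a (\<lambda>n. - b n) q) q t = lam2 * sum_squares q t"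
    using max1[of t] max2[of t] by linarith+
  show "(\<Sum>j<q. cyclic_jacobi a b q i j * geo_vector a q j) = lam1 * geo_vector a q i"
    if "i < q" for i
    unfolding t_def[symmetric] by (rule quad_form_maximizer_eigenvector[where K = "cyclic_jacobi a b q",
        OF cyclic_jacobi_sym max1 eq1 that])
  show "(\<Sum>j<q. cyclic_jacobi a (\<lambda>n. - b n) q i j * geo_vector a q j) = lam2 * geo_vector a q i"
    if "i < q" for i
    unfolding t_def[symmetric] by (rule quad_form_maximizer_eigenvector[
        where K = "cyclic_jacobi a (\<lambda>n. - b n) q", OF cyclic_jacobi_sym max2 eq2 that])
qed

lemma cyclic_jacobi_top_eigenvalues_spread:
  assumes "q \<ge> 1" and apos: "\<And>n. a n > 0"
    and aper: "\<forall>n. a (n + int q) = a n" and bper: "\<forall>n. b (n + int q) = b n"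
    and nonconst: "\<not> (\<forall>n. a (n + 1) = a n \<and> b (n + 1) = b n)"
  obtains lam1 lam2 where "poly ((discr a b q)\<^sup>2 - 4) lam1 = 0"
    "poly ((discr a b q)\<^sup>2 - 4) (- lam2) = 0" "4 * geo_mean_a a q < lam1 + lam2"
proof -
  have a_nz: "a n \<noteq> 0" for n
    using apos[of n] by simp
  obtain lam1 where root1: "poly ((discr a b q)\<^sup>2 - 4) lam1 = 0"
    and max1: "\<And>v. quad_form (cyclic_jacobi a b q) q v \<le> lam1 * sum_squares q v"
    by (rule cyclic_jacobi_top_eigenvalue_root[OF \<open>q \<ge> 1\<close> a_nz aper bper, where sig = 1]) simp_all
  obtain lam2 where root2: "poly ((discr a b q)\<^sup>2 - 4) (- lam2) = 0"
    and max2: "\<And>v. quad_form (cyclic_jacobi a (\<lambda>n. - b n) q) q v \<le> lam2 * sum_squares q v"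
    by (rule cyclic_jacobi_top_eigenvalue_root[OF \<open>q \<ge> 1\<close> a_nz aper bper, where sig = "- 1"])
      simp_all
  define N where "N = sum_squares q (geo_vector a q)"
  have "4 * geo_mean_a a q * N \<le> (lam1 + lam2) * N"
    using max1[of "geo_vector a q"] max2[of "geo_vector a q"]
      quad_form_cyclic_jacobi_geo_vector_sum[OF \<open>q \<ge> 1\<close> apos aper, of b]
    by (simp add: N_def algebra_simps)
  then have "4 * geo_mean_a a q \<le> lam1 + lam2"
    using sum_squares_geo_vector_pos[OF \<open>q \<ge> 1\<close> apos] by (simp add: N_def)
  moreover have "lam1 + lam2 \<noteq> 4 * geo_mean_a a q"
  proof
    assume lam: "lam1 + lam2 = 4 * geo_mean_a a q"
    from geo_vector_common_eigenvector_imp_constant[OF \<open>q \<ge> 1\<close> apos aper bper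
        geo_vector_eigenvector_if_rayleigh_tight[OF \<open>q \<ge> 1\<close> apos aper max1 max2 lam] lam]
    show False
      using nonconst by metis
  qed
  ultimately show ?thesis
    using that root1 root2 by fastforce
qed

section \<open>Chebyshev's extremal property\<close>

fun chebyshev :: "nat \<Rightarrow> real poly" where
  "chebyshev 0 = 1"
| "chebyshev (Suc 0) = [:0, 1:]"
| "chebyshev (Suc (Suc n)) = pCons 0 (smult 2 (chebyshev (Suc n))) - chebyshev n"

lemma poly_chebyshev_cos: "poly (chebyshev n) (cos t) = cos (real n * t)"
proof (induction n rule: chebyshev.induct)
  case (3 n)
  have "cos (real (Suc (Suc n)) * t) + cos (real n * t) = 2 * cos t * cos (real (Suc n) * t)"
    using cos_add[of "real (Suc n) * t" t] cos_diff[of "real (Suc n) * t" t]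
    by (simp add: algebra_simps)
  then show ?case
    using 3 by (simp add: algebra_simps)
qed simp_all

lemma degree_coeff_chebyshev:
  "degree (chebyshev n) \<le> n \<and> coeff (chebyshev n) n = (if n = 0 then 1 else 2 ^ (n - 1))"
proof (induction n rule: chebyshev.induct)
  case (3 n)
  have "degree (pCons 0 (smult 2 (chebyshev (Suc n)))) \<le> Suc (Suc n)"
    using "3.IH"(1) le_trans[OF degree_pCons_le] by simp
  then have "degree (chebyshev (Suc (Suc n))) \<le> Suc (Suc n)"
    using "3.IH"(2) by (simp add: degree_diff_le)
  moreover have "coeff (chebyshev n) (Suc (Suc n)) = 0"
    using "3.IH"(2) by (simp add: coeff_eq_0)
  ultimately show ?case
    using "3.IH"(1) by simp
qed (auto simp: degree_pCons_le)

lemma alternating_signs_degree: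
  fixes R :: "real poly" and y :: "nat \<Rightarrow> real"
  assumes decr: "\<And>k k'. k < k' \<Longrightarrow> k' \<le> n \<Longrightarrow> y k' < y k"
    and alt: "\<And>k. k \<le> n \<Longrightarrow> (- 1) ^ k * poly R (y k) > 0"
  shows "n \<le> degree R"
proof -
  have "R \<noteq> 0"
    using alt[of 0] by auto
  have "\<exists>x. y (Suc k) < x \<and> x < y k \<and> poly R x = 0" if "k < n" for k
  proof -
    have "(- 1) ^ k * poly R (y (Suc k)) < 0" "(- 1) ^ k * poly R (y k) > 0"
      using alt[of "Suc k"] alt[of k] that by simp_all
    moreover have "y (Suc k) < y k"
      using decr[of k "Suc k"] that by simp
    moreover have "isCont (\<lambda>x. (- 1) ^ k * poly R x) x" for x
      by (intro continuous_intros)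
    ultimately obtain x where "y (Suc k) \<le> x" "x \<le> y k" "(- 1) ^ k * poly R x = 0"
      using IVT[of "\<lambda>x. (- 1) ^ k * poly R x" "y (Suc k)" 0 "y k"] by force
    moreover from this(3) have "x \<noteq> y k" "x \<noteq> y (Suc k)"
      using \<open>(- 1) ^ k * poly R (y (Suc k)) < 0\<close> \<open>(- 1) ^ k * poly R (y k) > 0\<close> by auto
    ultimately show ?thesis
      by (intro exI[of _ x]) simp
  qed
  then obtain x where x: "\<And>k. k < n \<Longrightarrow> y (Suc k) < x k \<and> x k < y k \<and> poly R (x k) = 0"
    by metis
  have "x k' < x k" if "k < k'" "k' < n" for k k'
  proof -
    have "y k' \<le> y (Suc k)"
      using decr[of "Suc k" k'] that by (cases "Suc k = k'") auto
    then show ?thesis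
      using x[of k] x[of k'] that by simp
  qed
  then have "inj_on x {..<n}"
    by (intro inj_onI) (metis lessThan_iff linorder_neq_iff less_irrefl)
  then have "n = card (x ` {..<n})"
    by (simp add: card_image)
  also have "\<dots> \<le> card {z. poly R z = 0}"
    using x poly_roots_finite[OF \<open>R \<noteq> 0\<close>] by (intro card_mono) auto
  also have "\<dots> \<le> degree R"
    by (rule card_poly_roots_bound[OF \<open>R \<noteq> 0\<close>])
  finally show ?thesis .
qed

text \<open>If \<open>|coeff P n|\<close> were larger, \<open>T\<^sub>n - s P\<close> with \<open>s = 2\<^sup>n\<^sup>-\<^sup>1 / coeff P n\<close> would have
  degree less than \<open>n\<close> but alternate in sign at the \<open>n + 1\<close> extrema of \<open>T\<^sub>n\<close> on \<open>[-1, 1]\<close>.\<close>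
lemma chebyshev_coeff_bound:
  fixes P :: "real poly"
  assumes "n \<ge> 1" "degree P \<le> n" and bound: "\<And>y. - 1 \<le> y \<Longrightarrow> y \<le> 1 \<Longrightarrow> \<bar>poly P y\<bar> \<le> 1"
  shows "\<bar>coeff P n\<bar> \<le> 2 ^ (n - 1)"
proof (rule ccontr)
  assume "\<not> ?thesis"
  then have big: "2 ^ (n - 1) < \<bar>coeff P n\<bar>"
    by simp
  define s where "s = 2 ^ (n - 1) / coeff P n"
  have "\<bar>s\<bar> < 1"
    using big by (simp add: s_def abs_div_pos divide_less_eq)
  define R where "R = chebyshev n - smult s P"
  have "degree R \<le> n" "coeff R n = 0"
    using degree_coeff_chebyshev[of n] \<open>degree P \<le> n\<close> \<open>n \<ge> 1\<close> big
    by (auto simp: R_def s_def degree_diff_le)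
  define y where "y k = cos (real k * pi / real n)" for k
  have "(- 1) ^ k * poly R (y k) > 0" for k
  proof -
    have "poly (chebyshev n) (y k) = (- 1) ^ k"
      using \<open>n \<ge> 1\<close> by (simp add: y_def poly_chebyshev_cos)
    moreover have "\<bar>s\<bar> * \<bar>poly P (y k)\<bar> \<le> \<bar>s\<bar>"
      using bound[of "y k"] by (simp add: y_def mult_left_le)
    then have "\<bar>s * poly P (y k)\<bar> < 1"
      using \<open>\<bar>s\<bar> < 1\<close> by (simp add: abs_mult)
    ultimately show ?thesis
      by (simp add: R_def algebra_simps abs_less_iff) (cases "even k"; simp)
  qed
  moreover have "y k' < y k" if "k < k'" "k' \<le> n" for k k'
    unfolding y_def using that \<open>n \<ge> 1\<close>
    by (intro cos_monotone_0_pi) (auto simp: field_simps)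
  ultimately have "n \<le> degree R"
    by (intro alternating_signs_degree) auto
  then have "R = 0"
    using \<open>degree R \<le> n\<close> \<open>coeff R n = 0\<close> by (metis le_antisym leading_coeff_0_iff)
  then show False
    using \<open>(- 1) ^ 0 * poly R (y 0) > 0\<close> by simp
qed

lemma chebyshev_lead_coeff_bound_interval:
  fixes p :: "real poly"
  assumes "degree p = n" "n \<ge> 1" "lo < hi"
    and bounded: "\<And>x. lo \<le> x \<Longrightarrow> x \<le> hi \<Longrightarrow> \<bar>poly p x\<bar> \<le> 2"
  shows "\<bar>lead_coeff p\<bar> * ((hi - lo) / 2) ^ n \<le> 2 ^ n"
proof -
  define c where "c = (hi - lo) / 2"
  have "c > 0"
    using \<open>lo < hi\<close> by (simp add: c_def)
  define P where "P = smult (1 / 2) (pcompose p [:(lo + hi) / 2, c:])"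
  have "degree P = n" "coeff P n = lead_coeff p * c ^ n / 2"
    using assms(1) lead_coeff_comp[of "[:(lo + hi) / 2, c:]" p] \<open>c > 0\<close>
    by (simp_all add: P_def degree_pcompose)
  moreover have "\<bar>poly P y\<bar> \<le> 1" if "- 1 \<le> y" "y \<le> 1" for y
  proof -
    have "\<bar>c * y\<bar> \<le> c"
      using that \<open>c > 0\<close> by (simp add: abs_mult mult_left_le)
    then have "lo \<le> (lo + hi) / 2 + c * y" "(lo + hi) / 2 + c * y \<le> hi"
      by (simp_all add: c_def abs_le_iff field_simps)
    then have "\<bar>poly p ((lo + hi) / 2 + c * y)\<bar> \<le> 2"
      by (rule bounded)
    moreover have "poly P y = poly p ((lo + hi) / 2 + c * y) / 2"
      by (simp add: P_def poly_pcompose mult.commute)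
    ultimately show ?thesis
      by simp
  qed
  ultimately have "\<bar>lead_coeff p\<bar> * c ^ n / 2 \<le> 2 ^ (n - 1)"
    using chebyshev_coeff_bound[OF \<open>n \<ge> 1\<close>, of P] \<open>c > 0\<close> by (simp add: abs_mult)
  moreover have "(2::real) ^ n = 2 * 2 ^ (n - 1)"
    using \<open>n \<ge> 1\<close> by (simp flip: power_Suc)
  ultimately show ?thesis
    by (simp add: c_def)
qed

lemma band_width_le_if_discr_bounded:
  assumes "q \<ge> 1" and apos: "\<And>n. a n > 0"
    and bounded: "\<And>x. lo \<le> x \<Longrightarrow> x \<le> hi \<Longrightarrow> \<bar>poly (discr a b q) x\<bar> \<le> 2"
  shows "hi - lo \<le> 4 * geo_mean_a a q"
proof (cases "lo < hi")
  case True
  define A where "A = geo_mean_a a q"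
  have A: "A > 0" "A ^ q = (\<Prod>k=1..q. a (int k))"
    using geo_mean_a_pos_pow[of q a, OF \<open>q \<ge> 1\<close> apos] by (simp_all add: A_def)
  have D: "degree (discr a b q) = q" "lead_coeff (discr a b q) = 1 / A ^ q"
    using degree_lead_coeff_discr[OF _ \<open>q \<ge> 1\<close>, of a b] apos A(2)
    by (simp_all add: less_imp_neq[symmetric])
  have "((hi - lo) / 2) ^ q / A ^ q \<le> 2 ^ q"
    using chebyshev_lead_coeff_bound_interval[OF D(1) \<open>q \<ge> 1\<close> True bounded] D(2) A(1)
    by simp
  then have "((hi - lo) / 2) ^ Suc (q - 1) \<le> (2 * A) ^ Suc (q - 1)"
    using A(1) \<open>q \<ge> 1\<close> by (simp add: pos_divide_le_eq power_mult_distrib)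
  then have "(hi - lo) / 2 \<le> 2 * A"
    by (rule power_le_imp_le_base) (use A(1) in simp)
  then show ?thesis
    by (simp add: A_def)
next
  case False
  then show ?thesis
    using geo_mean_a_pos_pow(1)[of q a, OF \<open>q \<ge> 1\<close> apos] by simp
qed

theorem lemma2:
  fixes a b :: "int \<Rightarrow> real" and q :: nat
  assumes "q \<ge> 2"
    and "\<forall>n. a n > 0"
    and "\<forall>n. a (n + int q) = a n"
    and "\<forall>n. b (n + int q) = b n"
    and "\<forall>p. 1 \<le> p \<and> p < q \<longrightarrow> \<not> (\<forall>n. a (n + int p) = a n \<and> b (n + int p) = b n)"
  shows "half_width a b q > 2 * geo_mean_a a q
         \<and> (\<exists>m\<in>{1..q-1}. edge_minus a b q m < edge_plus a b q m)"
proof -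
  have "q \<ge> 1" and apos: "\<And>n. a n > 0" and a_nz: "\<And>n. a n \<noteq> 0"
    using assms(1,2) by (auto simp: less_imp_neq[symmetric])
  have aq: "a (int q) = a 0"
    using assms(3)[rule_format, of 0] by simp
  have "\<not> (\<forall>n. a (n + 1) = a n \<and> b (n + 1) = b n)"
    using assms(1,5) by force
  then obtain lam1 lam2 where roots: "poly ((discr a b q)\<^sup>2 - 4) lam1 = 0"
      "poly ((discr a b q)\<^sup>2 - 4) (- lam2) = 0" and "4 * geo_mean_a a q < lam1 + lam2"
    by (rule cyclic_jacobi_top_eigenvalues_spread[OF \<open>q \<ge> 1\<close> apos assms(3,4)])
  then have width: "4 * geo_mean_a a q < edge_minus a b q q - edge_plus a b q 0"
    using discr_roots_within_spectrum[OF \<open>q \<ge> 1\<close> a_nz aq roots(1)]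
      discr_roots_within_spectrum[OF \<open>q \<ge> 1\<close> a_nz aq roots(2)] by linarith
  have "\<exists>m\<in>{1..q-1}. edge_minus a b q m < edge_plus a b q m"
  proof (rule ccontr)
    assume "\<not> ?thesis"
    then have "edge_minus a b q q - edge_plus a b q 0 \<le> 4 * geo_mean_a a q"
      using discr_bounded_if_gaps_closed[OF \<open>q \<ge> 1\<close> a_nz aq]
      by (intro band_width_le_if_discr_bounded[OF \<open>q \<ge> 1\<close> apos]) blast
    with width show False
      by simp
  qed
  with width show ?thesis
    by (simp add: half_width_def)
qed
end
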